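(* Let $\mathcal S$ be a finite collection of subsets of $[d]$ satisfying the merged-staircase property, i.e. its elements can be ordered $S_1,\dots,S_r$ so that $|S_i\setminus\bigcup_{j<i}S_j|\le1$ for every $i$. Draw $\{\alpha_S\}_{S\in\mathcal S}$ from any probability measure on $\mathbb R^{|\mathcal S|}$ absolutely continuous with respect to Lebesgue measure, and let $f^*=\sum_{S\in\mathcal S}\alpha_S\chi_S$. Then $f^*$ satisfies the stable merged-staircase property almost surely.
   Context: $\chi_S(\mathbf x)=\prod_{j\in S}x_j$ on $\{\pm1\}^d$. Every $f:\{\pm1\}^m\to\mathbb R$ has a unique expansion $f=\sum_S\beta_S\chi_S$; $f$ satisfies MSP if the sets $S$ with $\beta_S\ne0$ can be ordered $S_1,\dots,S_r$ with $|S_i\setminus\bigcup_{j<i}S_j|\le1$ for all $i$. A cell is $C=\{\mathbf x\in\{\pm1\}^d:x_j=z_j,\ j\in J(C)\}$; the restriction $f^*|_C$ is viewed as a function of the free coordinates $x_j$, $j\notin J(C)$. $f^*$ satisfies the stable merged-staircase property (SMSP) if $f^*|_C$ satisfies MSP for every cell $C$. *)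

theory Defs
  imports "HOL-Probability.Probability"
begin

definition cube :: "nat set \<Rightarrow> (nat \<Rightarrow> real) set" where
  "cube I = PiE I (\<lambda>_. {-1, 1})"

definition chi :: "nat set \<Rightarrow> (nat \<Rightarrow> real) \<Rightarrow> real" where
  "chi S x = (\<Prod>j\<in>S. x j)"

definition merged_staircase :: "nat set set \<Rightarrow> bool" where
  "merged_staircase SS \<longleftrightarrow>
     (\<exists>ss :: nat set list. distinct ss \<and> set ss = SS \<and>
        (\<forall>i < length ss. card (ss ! i - \<Union> (set (take i ss))) \<le> 1))"

text \<open>MSP for a function on the cube with coordinate set I: the (unique) Fourier
  expansion has a support satisfying the merged-staircase property.\<close>
definition MSP_on :: "nat set \<Rightarrow> ((nat \<Rightarrow> real) \<Rightarrow> real) \<Rightarrow> bool" where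
  "MSP_on I f \<longleftrightarrow>
     (\<exists>\<beta> :: nat set \<Rightarrow> real.
        (\<forall>x\<in>cube I. f x = (\<Sum>S\<in>Pow I. \<beta> S * chi S x)) \<and>
        merged_staircase {S \<in> Pow I. \<beta> S \<noteq> 0})"

definition restrict_cell :: "((nat \<Rightarrow> real) \<Rightarrow> real) \<Rightarrow> nat set \<Rightarrow> (nat \<Rightarrow> real)
    \<Rightarrow> (nat \<Rightarrow> real) \<Rightarrow> real" where
  "restrict_cell f J z = (\<lambda>y. f (\<lambda>j. if j \<in> J then z j else y j))"

definition SMSP :: "nat \<Rightarrow> ((nat \<Rightarrow> real) \<Rightarrow> real) \<Rightarrow> bool" where
  "SMSP d f \<longleftrightarrow>
     (\<forall>J \<subseteq> {1..d}. \<forall>z\<in>cube J. MSP_on ({1..d} - J) (restrict_cell f J z))"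

end

theory Submission
  imports Defs
begin

(* On the cell fixing the coordinates in J to z, the restriction of f = sum_S alpha_S chi_S
   has the Fourier coefficients beta_T = sum {alpha_S * chi_(S inter J)(z) | S - J = T}, so its
   support lies in {S - J | S in SS}, which inherits a merged-staircase ordering from SS.
   Equality holds unless some beta_T vanishes.  Each beta_T is a nonzero linear form in alpha
   (its coefficients chi_(S inter J)(z) are +-1), so its zero set is a Lebesgue-null hyperplane;
   as there are finitely many cells and sets T, the exceptional set is null for every law of
   alpha absolutely continuous with respect to Lebesgue measure. *)

definition staircase_list :: "'a set list \<Rightarrow> bool" where
  "staircase_list ss \<longleftrightarrow> (\<forall>i < length ss. card (ss ! i - \<Union> (set (take i ss))) \<le> 1)"

lemma staircase_list_snoc:
  "staircase_list (ss @ [S]) \<longleftrightarrow> staircase_list ss \<and> card (S - \<Union> (set ss)) \<le> 1"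
  unfolding staircase_list_def
  by (auto simp: nth_append less_Suc_eq)

lemma staircase_list_remove_duplicates:
  assumes "staircase_list ss"
  shows "\<exists>ts. distinct ts \<and> set ts = set ss \<and> staircase_list ts"
  using assms
proof (induction ss rule: rev_induct)
  case Nil
  then show ?case by simp
next
  case (snoc S ss)
  then obtain ts where ts: "distinct ts" "set ts = set ss" "staircase_list ts"
    by (auto simp: staircase_list_snoc)
  show ?case
  proof (cases "S \<in> set ss")
    case True
    then show ?thesis using ts by auto
  next
    case False
    then show ?thesis
      using ts snoc.prems by (intro exI[of _ "ts @ [S]"]) (auto simp: staircase_list_snoc)
  qed
qed

lemma merged_staircase_iff_staircase_list:
  "merged_staircase SS \<longleftrightarrow> (\<exists>ss. set ss = SS \<and> staircase_list ss)"
  unfolding merged_staircase_def staircase_list_def[symmetric]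
  using staircase_list_remove_duplicates by blast

text \<open>Finiteness matters: card of an infinite set is 0, so removing J could otherwise
  create a finite new part of size above 1.\<close>
lemma staircase_list_map_diff:
  assumes "staircase_list ss" and "\<forall>S\<in>set ss. finite S"
  shows "staircase_list (map (\<lambda>S. S - J) ss)"
  unfolding staircase_list_def
proof (intro allI impI)
  fix i assume "i < length (map (\<lambda>S. S - J) ss)"
  then have i: "i < length ss" by simp
  have "map (\<lambda>S. S - J) ss ! i - \<Union> (set (take i (map (\<lambda>S. S - J) ss)))
      \<subseteq> ss ! i - \<Union> (set (take i ss))"
    using i by (auto simp: take_map)
  moreover have "finite (ss ! i)" using i assms(2) by simp
  ultimately have "card (map (\<lambda>S. S - J) ss ! i - \<Union> (set (take i (map (\<lambda>S. S - J) ss))))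
      \<le> card (ss ! i - \<Union> (set (take i ss)))"
    by (intro card_mono) auto
  also have "\<dots> \<le> 1" using assms(1) i unfolding staircase_list_def by blast
  finally show "card (map (\<lambda>S. S - J) ss ! i - \<Union> (set (take i (map (\<lambda>S. S - J) ss)))) \<le> 1" .
qed

lemma merged_staircase_image_diff:
  assumes "merged_staircase SS" and "\<forall>S\<in>SS. finite S"
  shows "merged_staircase ((\<lambda>S. S - J) ` SS)"
proof -
  obtain ss where "set ss = SS" "staircase_list ss"
    using assms(1) by (auto simp: merged_staircase_iff_staircase_list)
  then show ?thesis
    using assms(2) staircase_list_map_diff
    by (auto simp: merged_staircase_iff_staircase_list intro!: exI[of _ "map (\<lambda>S. S - J) ss"])
qed

lemma null_sets_PiM_lborel_linear_eq_zero:
  fixes I A :: "'i set" and c :: "'i \<Rightarrow> real"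
  assumes "finite I" and "A \<subseteq> I" and "i \<in> A" and "c i \<noteq> 0"
  shows "{x \<in> space (PiM I (\<lambda>_. lborel)). (\<Sum>j\<in>A. c j * x j) = 0} \<in> null_sets (PiM I (\<lambda>_. lborel))"
proof -
  interpret product_sigma_finite "\<lambda>_. lborel :: real measure" by standard
  let ?N = "PiM I (\<lambda>_. lborel :: real measure)"
  define H where "H = {x \<in> space ?N. (\<Sum>j\<in>A. c j * x j) = 0}"
  have "finite A" using assms(1,2) finite_subset by blast
  have "(\<lambda>x. \<Sum>j\<in>A. c j * x j) \<in> borel_measurable ?N"
    using assms(2) by (auto intro!: borel_measurable_sum borel_measurable_times measurable_component_singleton)
  then have H_sets: "H \<in> sets ?N"
    unfolding H_def by measurable
  \<comment> \<open>By Fubini it suffices that every line in direction i meets H in at most one point.\<close>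
  have slice_null: "(\<integral>\<^sup>+ y. indicator H (x(i := y)) \<partial>lborel) = 0" for x
  proof -
    define p where "p = - (\<Sum>j\<in>A - {i}. c j * x j) / c i"
    have "indicator H (x(i := y)) \<le> (indicator {p} y :: ennreal)" for y
    proof (cases "x(i := y) \<in> H")
      case True
      then have "c i * y + (\<Sum>j\<in>A - {i}. c j * x j) = 0"
        using \<open>finite A\<close> assms(3) by (simp add: H_def sum.remove[of A i])
      then have "y = p" unfolding p_def using assms(4) by (simp add: field_simps)
      then show ?thesis using True by simp
    qed simp
    then have "(\<integral>\<^sup>+ y. indicator H (x(i := y)) \<partial>lborel) \<le> (\<integral>\<^sup>+ y. indicator {p} y \<partial>lborel)"
      by (intro nn_integral_mono) auto
    then show ?thesis by simp
  qed
  have "i \<in> I" using assms(2,3) by blast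
  have "emeasure ?N H = (\<integral>\<^sup>+ x. indicator H x \<partial>?N)"
    using H_sets by simp
  also have "\<dots> = (\<integral>\<^sup>+ x. (\<integral>\<^sup>+ y. indicator H (x(i := y)) \<partial>lborel) \<partial>PiM (I - {i}) (\<lambda>_. lborel))"
    using product_nn_integral_insert[of "I - {i}" i "indicator H"] assms(1) H_sets
    by (simp add: insert_absorb[OF \<open>i \<in> I\<close>])
  also have "\<dots> = 0"
    by (simp add: slice_null)
  finally show ?thesis
    using H_sets by (simp add: H_def null_sets_def)
qed

lemma finite_cube: "finite J \<Longrightarrow> finite (cube J)"
  unfolding cube_def by (intro finite_PiE) auto

lemma chi_cube_nonzero:
  assumes "finite S" and "S \<subseteq> J" and "z \<in> cube J"
  shows "chi S z \<noteq> 0"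
  using assms unfolding chi_def cube_def by (force simp: PiE_iff)

lemma chi_merge:
  assumes "finite S"
  shows "chi S (\<lambda>j. if j \<in> J then z j else y j) = chi (S \<inter> J) z * chi (S - J) y"
proof -
  have "chi S (\<lambda>j. if j \<in> J then z j else y j)
      = (\<Prod>j\<in>S \<inter> J. if j \<in> J then z j else y j) * (\<Prod>j\<in>S - J. if j \<in> J then z j else y j)"
    unfolding chi_def using assms by (subst prod.Int_Diff[of _ _ J]) auto
  also have "\<dots> = chi (S \<inter> J) z * chi (S - J) y"
    unfolding chi_def by (intro arg_cong2[where f = "(*)"] prod.cong) auto
  finally show ?thesis .
qed

definition cell_coeff :: "nat set set \<Rightarrow> (nat set \<Rightarrow> real) \<Rightarrow> nat set \<Rightarrow> (nat \<Rightarrow> real) \<Rightarrow> nat set \<Rightarrow> real" where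
  "cell_coeff SS \<alpha> J z T = (\<Sum>S\<in>{S\<in>SS. S - J = T}. \<alpha> S * chi (S \<inter> J) z)"

lemma restrict_cell_sum_chi:
  assumes "finite K" and "\<forall>S\<in>SS. S \<subseteq> K"
  shows "restrict_cell (\<lambda>x. \<Sum>S\<in>SS. \<alpha> S * chi S x) J z y
    = (\<Sum>T\<in>Pow (K - J). cell_coeff SS \<alpha> J z T * chi T y)"
proof -
  have "finite SS" using assms by (meson Pow_iff finite_Pow_iff rev_finite_subset subsetI)
  have "restrict_cell (\<lambda>x. \<Sum>S\<in>SS. \<alpha> S * chi S x) J z y
      = (\<Sum>S\<in>SS. \<alpha> S * chi (S \<inter> J) z * chi (S - J) y)"
    unfolding restrict_cell_def using assms
    by (intro sum.cong) (auto simp: chi_merge finite_subset)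
  also have "\<dots> = (\<Sum>T\<in>Pow (K - J). \<Sum>S\<in>{S\<in>SS. S - J = T}. \<alpha> S * chi (S \<inter> J) z * chi (S - J) y)"
    using \<open>finite SS\<close> assms by (intro sum.group[symmetric]) auto
  also have "\<dots> = (\<Sum>T\<in>Pow (K - J). cell_coeff SS \<alpha> J z T * chi T y)"
    unfolding cell_coeff_def sum_distrib_right by (intro sum.cong) auto
  finally show ?thesis .
qed

lemma cell_coeff_support:
  assumes "\<forall>S\<in>SS. S \<subseteq> K" and "\<forall>T\<in>(\<lambda>S. S - J) ` SS. cell_coeff SS \<alpha> J z T \<noteq> 0"
  shows "{T \<in> Pow (K - J). cell_coeff SS \<alpha> J z T \<noteq> 0} = (\<lambda>S. S - J) ` SS"
proof
  show "{T \<in> Pow (K - J). cell_coeff SS \<alpha> J z T \<noteq> 0} \<subseteq> (\<lambda>S. S - J) ` SS"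
  proof
    fix T assume "T \<in> {T \<in> Pow (K - J). cell_coeff SS \<alpha> J z T \<noteq> 0}"
    then have "{S\<in>SS. S - J = T} \<noteq> {}"
      unfolding cell_coeff_def by force
    then show "T \<in> (\<lambda>S. S - J) ` SS" by blast
  qed
  show "(\<lambda>S. S - J) ` SS \<subseteq> {T \<in> Pow (K - J). cell_coeff SS \<alpha> J z T \<noteq> 0}"
    using assms by blast
qed

lemma MSP_on_restrict_cell:
  assumes "finite K" and "\<forall>S\<in>SS. S \<subseteq> K" and "merged_staircase SS"
    and "\<forall>T\<in>(\<lambda>S. S - J) ` SS. cell_coeff SS \<alpha> J z T \<noteq> 0"
  shows "MSP_on (K - J) (restrict_cell (\<lambda>x. \<Sum>S\<in>SS. \<alpha> S * chi S x) J z)"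
  unfolding MSP_on_def
proof (intro exI[of _ "cell_coeff SS \<alpha> J z"] conjI ballI)
  have "merged_staircase ((\<lambda>S. S - J) ` SS)"
    using assms(1-3) by (intro merged_staircase_image_diff) (auto intro: finite_subset)
  then show "merged_staircase {T \<in> Pow (K - J). cell_coeff SS \<alpha> J z T \<noteq> 0}"
    unfolding cell_coeff_support[OF assms(2,4)] .
qed (use assms in \<open>simp add: restrict_cell_sum_chi\<close>)

lemma cell_coeff_eq_zero_null:
  assumes "finite SS" and "\<forall>S\<in>SS. finite S" and "z \<in> cube J" and "T \<in> (\<lambda>S. S - J) ` SS"
  shows "{\<alpha> \<in> space (PiM SS (\<lambda>_. lborel)). cell_coeff SS \<alpha> J z T = 0} \<in> null_sets (PiM SS (\<lambda>_. lborel))"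
proof -
  obtain S0 where S0: "S0 \<in> SS" "T = S0 - J" using assms(4) by blast
  have "chi (S0 \<inter> J) z \<noteq> 0"
    using assms(2,3) S0(1) by (intro chi_cube_nonzero) auto
  then have "{\<alpha> \<in> space (PiM SS (\<lambda>_. lborel)). (\<Sum>S\<in>{S\<in>SS. S - J = T}. chi (S \<inter> J) z * \<alpha> S) = 0}
      \<in> null_sets (PiM SS (\<lambda>_. lborel))"
    using assms(1) S0 by (intro null_sets_PiM_lborel_linear_eq_zero[where i = S0]) auto
  then show ?thesis
    unfolding cell_coeff_def by (simp add: mult.commute)
qed

lemma SMSP_if_cell_coeff_nonzero:
  assumes "\<forall>S\<in>SS. S \<subseteq> {1..d}" and "merged_staircase SS"
    and "\<And>J z T. J \<subseteq> {1..d} \<Longrightarrow> z \<in> cube J \<Longrightarrow> T \<in> (\<lambda>S. S - J) ` SS \<Longrightarrow>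
      cell_coeff SS \<alpha> J z T \<noteq> 0"
  shows "SMSP d (\<lambda>x. \<Sum>S\<in>SS. \<alpha> S * chi S x)"
  unfolding SMSP_def using assms by (auto intro!: MSP_on_restrict_cell)

theorem propositionG1:
  fixes d :: nat and SS :: "nat set set" and M :: "(nat set \<Rightarrow> real) measure"
  assumes "finite SS"
    and "\<forall>S\<in>SS. S \<subseteq> {1..d}"
    and "merged_staircase SS"
    and "prob_space M"
    and "sets M = sets (PiM SS (\<lambda>_. lborel))"
    and "absolutely_continuous (PiM SS (\<lambda>_. lborel)) M"
  shows "AE \<alpha> in M. SMSP d (\<lambda>x. \<Sum>S\<in>SS. \<alpha> S * chi S x)"
proof -
  let ?N = "PiM SS (\<lambda>_. lborel :: real measure)"
  define Bad where "Bad = (\<Union>J\<in>Pow {1..d}. \<Union>z\<in>cube J. \<Union>T\<in>(\<lambda>S. S - J) ` SS.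
    {\<alpha> \<in> space ?N. cell_coeff SS \<alpha> J z T = 0})"
  have "Bad \<in> null_sets ?N"
    unfolding Bad_def using assms(1,2)
    by (intro null_sets_UN' countable_finite cell_coeff_eq_zero_null)
      (auto intro: finite_subset finite_cube)
  then have Bad_null: "Bad \<in> null_sets M"
    using assms(6) unfolding absolutely_continuous_def by blast
  have space_M: "space M = space ?N"
    using assms(5) by (rule sets_eq_imp_space_eq)
  have "SMSP d (\<lambda>x. \<Sum>S\<in>SS. \<alpha> S * chi S x)" if "\<alpha> \<in> space M - Bad" for \<alpha>
    using assms(2,3) by (rule SMSP_if_cell_coeff_nonzero) (use that space_M in \<open>auto simp: Bad_def\<close>)
  then show ?thesis
    by (intro AE_I'[OF Bad_null]) auto
qed

end
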